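(* If a regular curve $\gamma: I\to\mathbb{E}^4$ admits a generalized Bishop frame of type F, then it admits a generalized Bishop frame of type D.
   Context: A regular curve $\gamma: I\to\mathbb{E}^4$ ($I$ an open interval) is considered with arc-length parametrization; $\mathbb{T}=\gamma'$ is its unit tangent vector. A frame on $\gamma$ is an ordered orthonormal frame $(\mathbb{T},\mathbb{Z}_1,\mathbb{Z}_2,\mathbb{Z}_3)$ of smooth vector fields along $\gamma$ whose first vector is $\mathbb{T}$; it is identified with the smooth map $\mathbb{Z}: I\to O(4)$ whose rows are these vectors. Its coefficient matrix is the $\mathfrak{o}(4)$-valued function $X$ with $\mathbb{Z}'=X\mathbb{Z}$. A frame is of type D, resp. F, if, after possibly permuting $\mathbb{Z}_1,\mathbb{Z}_2,\mathbb{Z}_3$ (keeping $\mathbb{T}$ first), its coefficient matrix has the form, for some smooth functions $x_1,x_2,x_3$ (no sign conditions): Type D: $\begin{pmatrix}0&x_1&0&0\\-x_1&0&x_2&x_3\\0&-x_2&0&0\\0&-x_3&0&0\end{pmatrix}$; Type F: $\begin{pmatrix}0&x_1&0&0\\-x_1&0&x_2&0\\0&-x_2&0&x_3\\0&0&-x_3&0\end{pmatrix}$. *)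

theory Defs
  imports "HOL-Analysis.Analysis"
begin

definition smooth_on :: "real set \<Rightarrow> (real \<Rightarrow> 'a::real_normed_vector) \<Rightarrow> bool" where
  "smooth_on I f \<longleftrightarrow> (\<exists>D :: nat \<Rightarrow> real \<Rightarrow> 'a. D 0 = f \<and>
      (\<forall>n. \<forall>t\<in>I. (D n has_vector_derivative D (Suc n) t) (at t)))"

definition open_interval :: "real set \<Rightarrow> bool" where
  "open_interval I \<longleftrightarrow> open I \<and> is_interval I \<and> I \<noteq> {}"

definition unit_speed_curve :: "real set \<Rightarrow> (real \<Rightarrow> real^4) \<Rightarrow> bool" where
  "unit_speed_curve I \<gamma> \<longleftrightarrow> open_interval I \<and> smooth_on I \<gamma> \<and>
     (\<forall>t\<in>I. \<gamma> differentiable (at t) \<and> norm (vector_derivative \<gamma> (at t)) = 1)"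

(* a frame on \<gamma>: rows (T, Z1, Z2, Z3) orthonormal, smooth, first row the unit tangent *)
definition is_frame :: "real set \<Rightarrow> (real \<Rightarrow> real^4) \<Rightarrow> (real \<Rightarrow> real^4^4) \<Rightarrow> bool" where
  "is_frame I \<gamma> Z \<longleftrightarrow> smooth_on I Z \<and>
     (\<forall>t\<in>I. orthogonal_matrix (Z t) \<and> Z t $ 1 = vector_derivative \<gamma> (at t))"

definition matD :: "real \<Rightarrow> real \<Rightarrow> real \<Rightarrow> real^4^4" where
  "matD x1 x2 x3 = vector [vector [0, x1, 0, 0], vector [-x1, 0, x2, x3],
                           vector [0, -x2, 0, 0], vector [0, -x3, 0, 0]]"

definition matF :: "real \<Rightarrow> real \<Rightarrow> real \<Rightarrow> real^4^4" where
  "matF x1 x2 x3 = vector [vector [0, x1, 0, 0], vector [-x1, 0, x2, 0],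
                           vector [0, -x2, 0, x3], vector [0, 0, -x3, 0]]"

(* Z is a frame whose coefficient matrix, after permuting Z1,Z2,Z3 (keeping T first),
   has the form M (x1 t) (x2 t) (x3 t) for smooth x1 x2 x3 *)
definition frame_of_form ::
  "(real \<Rightarrow> real \<Rightarrow> real \<Rightarrow> real^4^4) \<Rightarrow> real set \<Rightarrow> (real \<Rightarrow> real^4) \<Rightarrow> (real \<Rightarrow> real^4^4) \<Rightarrow> bool" where
  "frame_of_form M I \<gamma> Z \<longleftrightarrow> is_frame I \<gamma> Z \<and>
     (\<exists>\<sigma> :: 4 \<Rightarrow> 4. \<sigma> permutes UNIV \<and> \<sigma> 1 = 1 \<and>
       (\<exists>x1 x2 x3 :: real \<Rightarrow> real. smooth_on I x1 \<and> smooth_on I x2 \<and> smooth_on I x3 \<and>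
         (\<forall>t\<in>I. ((\<lambda>s. \<chi> i. Z s $ \<sigma> i) has_vector_derivative
                    (M (x1 t) (x2 t) (x3 t) ** (\<chi> i. Z t $ \<sigma> i))) (at t))))"

definition frame_type_D where "frame_type_D = frame_of_form matD"
definition frame_type_F where "frame_type_F = frame_of_form matF"

end

(*
  In a frame (T, Z1, Z2, Z3) of type F the coefficient x3 only couples Z2 and Z3.  Rotating the
  (Z2, Z3)-plane through an angle \<theta> with \<theta>' = -x3 cancels this coupling: the rotated frame
  (T, Z1, cos \<theta> Z2 + sin \<theta> Z3, cos \<theta> Z3 - sin \<theta> Z2) has a coefficient matrix of type D with
  entries x1, x2 cos \<theta>, -x2 sin \<theta>.  The angle \<theta> is an antiderivative of the smooth function
  -x3, and the rotation matrix solves a linear ODE with smooth coefficients, so everything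
  stays smooth.
*)
theory Submission
  imports Defs
begin

section \<open>Differentiability of finite and infinite order\<close>

text \<open>\<^const>\<open>smooth_on\<close> fixes a whole sequence of derivatives at once, which makes closure under
  products awkward (Leibniz rule); at each finite order it is a plain induction.\<close>

primrec times_differentiable_on :: "nat \<Rightarrow> real set \<Rightarrow> (real \<Rightarrow> 'a::real_normed_vector) \<Rightarrow> bool" where
  "times_differentiable_on 0 I f \<longleftrightarrow> True"
| "times_differentiable_on (Suc n) I f \<longleftrightarrow>
     (\<exists>f'. (\<forall>t\<in>I. (f has_vector_derivative f' t) (at t)) \<and> times_differentiable_on n I f')"

lemma times_differentiable_on_SucI:
  assumes "\<And>t. t \<in> I \<Longrightarrow> (f has_vector_derivative f' t) (at t)" "times_differentiable_on n I f'"
  shows "times_differentiable_on (Suc n) I f"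
  using assms by auto

lemma times_differentiable_on_SucD:
  "times_differentiable_on (Suc n) I f \<Longrightarrow> times_differentiable_on n I f"
proof (induction n arbitrary: f)
  case (Suc n)
  obtain f' where "\<And>t. t \<in> I \<Longrightarrow> (f has_vector_derivative f' t) (at t)"
    and "times_differentiable_on (Suc n) I f'"
    using Suc.prems by auto
  with Suc.IH show ?case by auto
qed simp

lemma times_differentiable_on_cong:
  assumes "open I" "\<And>t. t \<in> I \<Longrightarrow> f t = g t" "times_differentiable_on n I f"
  shows "times_differentiable_on n I g"
proof (cases n)
  case (Suc m)
  then obtain f' where f': "\<And>t. t \<in> I \<Longrightarrow> (f has_vector_derivative f' t) (at t)"
    and "times_differentiable_on m I f'"
    using assms(3) by auto
  moreover have "(g has_vector_derivative f' t) (at t)" if "t \<in> I" for t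
    using has_vector_derivative_transform_within_open[OF f'[OF that] assms(1) that] assms(2) by auto
  ultimately show ?thesis using Suc times_differentiable_on_SucI by blast
qed simp

lemma times_differentiable_on_add:
  "times_differentiable_on n I f \<Longrightarrow> times_differentiable_on n I g \<Longrightarrow>
    times_differentiable_on n I (\<lambda>t. f t + g t)"
proof (induction n arbitrary: f g)
  case (Suc n)
  obtain f' g' where f': "\<And>t. t \<in> I \<Longrightarrow> (f has_vector_derivative f' t) (at t)"
    "times_differentiable_on n I f'"
    and g': "\<And>t. t \<in> I \<Longrightarrow> (g has_vector_derivative g' t) (at t)"
    "times_differentiable_on n I g'"
    using Suc.prems by auto
  have "((\<lambda>t. f t + g t) has_vector_derivative f' t + g' t) (at t)" if "t \<in> I" for t
    using has_vector_derivative_add[OF f'(1)[OF that] g'(1)[OF that]] .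
  from times_differentiable_on_SucI[OF this Suc.IH[OF f'(2) g'(2)]] show ?case .
qed simp

lemma times_differentiable_on_bounded_linear:
  assumes "bounded_linear L"
  shows "times_differentiable_on n I f \<Longrightarrow> times_differentiable_on n I (\<lambda>t. L (f t))"
proof (induction n arbitrary: f)
  case (Suc n)
  then obtain f' where f': "\<And>t. t \<in> I \<Longrightarrow> (f has_vector_derivative f' t) (at t)"
    and "times_differentiable_on n I f'"
    by auto
  have "((\<lambda>t. L (f t)) has_vector_derivative L (f' t)) (at t)" if "t \<in> I" for t
    using bounded_linear.has_vector_derivative[OF assms f'[OF that]] .
  from times_differentiable_on_SucI[OF this Suc.IH[OF \<open>times_differentiable_on n I f'\<close>]]
  show ?case .
qed simp

lemma times_differentiable_on_bounded_bilinear: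
  fixes prod :: "'a::real_normed_vector \<Rightarrow> 'b::real_normed_vector \<Rightarrow> 'c::real_normed_vector"
  assumes "bounded_bilinear prod"
  shows "times_differentiable_on n I f \<Longrightarrow> times_differentiable_on n I g \<Longrightarrow>
    times_differentiable_on n I (\<lambda>t. prod (f t) (g t))"
proof (induction n arbitrary: f g)
  case (Suc n)
  obtain f' g' where f': "\<And>t. t \<in> I \<Longrightarrow> (f has_vector_derivative f' t) (at t)"
    "times_differentiable_on n I f'"
    and g': "\<And>t. t \<in> I \<Longrightarrow> (g has_vector_derivative g' t) (at t)"
    "times_differentiable_on n I g'"
    using Suc.prems by auto
  have "times_differentiable_on n I (\<lambda>t. prod (f t) (g' t) + prod (f' t) (g t))"
    using Suc.IH[OF times_differentiable_on_SucD[OF Suc.prems(1)] g'(2)]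
      Suc.IH[OF f'(2) times_differentiable_on_SucD[OF Suc.prems(2)]]
    by (rule times_differentiable_on_add)
  moreover have "((\<lambda>t. prod (f t) (g t)) has_vector_derivative
      prod (f t) (g' t) + prod (f' t) (g t)) (at t)" if "t \<in> I" for t
    using bounded_bilinear.has_vector_derivative[OF assms f'(1)[OF that] g'(1)[OF that]] .
  ultimately show ?case by (rule times_differentiable_on_SucI[rotated])
qed simp

lemma times_differentiable_on_vector_derivative:
  assumes "open I" "times_differentiable_on (Suc n) I f"
  shows "times_differentiable_on n I (\<lambda>t. vector_derivative f (at t))"
proof -
  obtain f' where f': "\<And>t. t \<in> I \<Longrightarrow> (f has_vector_derivative f' t) (at t)"
    and f'_diff: "times_differentiable_on n I f'"
    using assms(2) by auto
  have "\<And>t. t \<in> I \<Longrightarrow> f' t = vector_derivative f (at t)"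
    using f' by (metis vector_derivative_at)
  from times_differentiable_on_cong[OF assms(1) this f'_diff] show ?thesis .
qed

lemma smooth_on_Suc:
  "smooth_on I f \<longleftrightarrow> (\<exists>f'. (\<forall>t\<in>I. (f has_vector_derivative f' t) (at t)) \<and> smooth_on I f')"
proof
  assume "smooth_on I f"
  then obtain D where "D 0 = f" "\<forall>n. \<forall>t\<in>I. (D n has_vector_derivative D (Suc n) t) (at t)"
    unfolding smooth_on_def by blast
  then show "\<exists>f'. (\<forall>t\<in>I. (f has_vector_derivative f' t) (at t)) \<and> smooth_on I f'"
    unfolding smooth_on_def by (intro exI[of _ "D 1"] conjI exI[of _ "\<lambda>n. D (Suc n)"]) auto
next
  assume "\<exists>f'. (\<forall>t\<in>I. (f has_vector_derivative f' t) (at t)) \<and> smooth_on I f'"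
  then obtain f' D where "\<forall>t\<in>I. (f has_vector_derivative f' t) (at t)"
    "D 0 = f'" "\<forall>n. \<forall>t\<in>I. (D n has_vector_derivative D (Suc n) t) (at t)"
    unfolding smooth_on_def by blast
  then show "smooth_on I f"
    unfolding smooth_on_def by (intro exI[of _ "case_nat f D"]) (auto split: nat.split)
qed

lemma smooth_on_coinduct:
  assumes "P f"
    and step: "\<And>g. P g \<Longrightarrow> \<exists>g'. (\<forall>t\<in>I. (g has_vector_derivative g' t) (at t)) \<and> P g'"
  shows "smooth_on I f"
proof -
  define next_deriv where
    "next_deriv g = (SOME g'. (\<forall>t\<in>I. (g has_vector_derivative g' t) (at t)) \<and> P g')" for g
  have next_deriv: "(\<forall>t\<in>I. (g has_vector_derivative next_deriv g t) (at t)) \<and> P (next_deriv g)"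
    if "P g" for g
    unfolding next_deriv_def using someI_ex[OF step[OF that]] .
  define D where "D n = (next_deriv ^^ n) f" for n
  have "P (D n)" for n
    by (induction n) (simp_all add: D_def assms(1) next_deriv)
  then show ?thesis
    unfolding smooth_on_def by (intro exI[of _ D]) (simp add: D_def next_deriv)
qed

lemma smooth_on_imp_times_differentiable_on:
  "smooth_on I f \<Longrightarrow> times_differentiable_on n I f"
proof (induction n arbitrary: f)
  case (Suc n)
  then show ?case by (auto simp: smooth_on_Suc[of I f])
qed simp

lemma smooth_on_iff_times_differentiable_on:
  assumes "open I"
  shows "smooth_on I f \<longleftrightarrow> (\<forall>n. times_differentiable_on n I f)"
proof
  show "smooth_on I f \<Longrightarrow> \<forall>n. times_differentiable_on n I f"
    using smooth_on_imp_times_differentiable_on by blast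
next
  assume "\<forall>n. times_differentiable_on n I f"
  then show "smooth_on I f"
  proof (rule smooth_on_coinduct)
    fix g :: "real \<Rightarrow> 'a"
    assume g: "\<forall>n. times_differentiable_on n I g"
    then have "\<forall>t\<in>I. (g has_vector_derivative vector_derivative g (at t)) (at t)"
      by (metis times_differentiable_on.simps(2) vector_derivative_at)
    moreover have "\<forall>n. times_differentiable_on n I (\<lambda>t. vector_derivative g (at t))"
      using g times_differentiable_on_vector_derivative[OF assms] by blast
    ultimately show "\<exists>g'. (\<forall>t\<in>I. (g has_vector_derivative g' t) (at t)) \<and>
        (\<forall>n. times_differentiable_on n I g')"
      by (intro exI[of _ "\<lambda>t. vector_derivative g (at t)"] conjI)
  qed
qed

lemma smooth_on_bounded_linear:
  assumes "open I" "bounded_linear L" "smooth_on I f"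
  shows "smooth_on I (\<lambda>t. L (f t))"
  unfolding smooth_on_iff_times_differentiable_on[OF assms(1)]
  using times_differentiable_on_bounded_linear[OF assms(2) smooth_on_imp_times_differentiable_on[OF assms(3)]]
  by blast

lemma smooth_on_bounded_bilinear:
  fixes prod :: "'a::real_normed_vector \<Rightarrow> 'b::real_normed_vector \<Rightarrow> 'c::real_normed_vector"
  assumes "open I" "bounded_bilinear prod" "smooth_on I f" "smooth_on I g"
  shows "smooth_on I (\<lambda>t. prod (f t) (g t))"
  unfolding smooth_on_iff_times_differentiable_on[OF assms(1)]
  using times_differentiable_on_bounded_bilinear[OF assms(2)]
    smooth_on_imp_times_differentiable_on[OF assms(3)] smooth_on_imp_times_differentiable_on[OF assms(4)]
  by blast

lemma smooth_on_linear_ode: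
  fixes prod :: "'a::real_normed_vector \<Rightarrow> 'b::real_normed_vector \<Rightarrow> 'b"
  assumes "open I" "bounded_bilinear prod" "smooth_on I A"
    and R': "\<And>t. t \<in> I \<Longrightarrow> (R has_vector_derivative prod (A t) (R t)) (at t)"
  shows "smooth_on I R"
proof -
  have "times_differentiable_on n I R" for n
  proof (induction n)
    case (Suc n)
    have "times_differentiable_on n I (\<lambda>t. prod (A t) (R t))"
      using smooth_on_imp_times_differentiable_on[OF assms(3)] Suc.IH
      by (rule times_differentiable_on_bounded_bilinear[OF assms(2)])
    with R' show ?case by (rule times_differentiable_on_SucI)
  qed simp
  then show ?thesis using smooth_on_iff_times_differentiable_on[OF assms(1)] by blast
qed

lemma open_interval_has_antiderivative:
  fixes f :: "real \<Rightarrow> 'a::euclidean_space"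
  assumes "open_interval I" "continuous_on I f"
  obtains F where "\<And>t. t \<in> I \<Longrightarrow> (F has_vector_derivative f t) (at t)"
proof -
  obtain t0 where "t0 \<in> I" using assms(1) unfolding open_interval_def by blast
  have "((\<lambda>u. LBINT y=t0..u. f y) has_vector_derivative f t) (at t)" if "t \<in> I" for t
  proof -
    obtain e where "e > 0" "ball t e \<subseteq> I"
      using assms(1) \<open>t \<in> I\<close> open_contains_ball unfolding open_interval_def by blast
    define a where "a = min t0 (t - e/2)"
    define b where "b = max t0 (t + e/2)"
    have "t - e/2 \<in> ball t e" "t + e/2 \<in> ball t e"
      using \<open>e > 0\<close> by (simp_all add: dist_real_def)
    then have "a \<in> I" "b \<in> I"
      using \<open>ball t e \<subseteq> I\<close> \<open>t0 \<in> I\<close> unfolding a_def b_def min_def max_def by auto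
    moreover have "is_interval I"
      using assms(1) unfolding open_interval_def by blast
    ultimately have "{a..b} \<subseteq> I"
      unfolding is_interval_1 by (meson atLeastAtMost_iff subsetI)
    have "a \<le> t0" "t0 \<le> b" "a < t" "t < b"
      using \<open>e > 0\<close> by (auto simp: a_def b_def)
    with continuous_on_subset[OF assms(2) \<open>{a..b} \<subseteq> I\<close>]
    have "((\<lambda>u. LBINT y=t0..u. f y) has_vector_derivative f t) (at t within {a..b})"
      by (intro interval_integral_FTC2) auto
    then show ?thesis using at_within_Icc_at[OF \<open>a < t\<close> \<open>t < b\<close>] by simp
  qed
  then show ?thesis using that by blast
qed

lemma smooth_on_has_smooth_antiderivative:
  fixes f :: "real \<Rightarrow> 'a::euclidean_space"
  assumes "open_interval I" "smooth_on I f"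
  obtains F where "smooth_on I F" "\<And>t. t \<in> I \<Longrightarrow> (F has_vector_derivative f t) (at t)"
proof -
  obtain f' where "\<forall>t\<in>I. (f has_vector_derivative f' t) (at t)"
    using assms(2) smooth_on_Suc by blast
  then have "continuous_on I f"
    by (meson continuous_at_imp_continuous_on has_vector_derivative_continuous)
  then obtain F where "\<And>t. t \<in> I \<Longrightarrow> (F has_vector_derivative f t) (at t)"
    using open_interval_has_antiderivative[OF assms(1)] by blast
  with assms(2) show ?thesis using that smooth_on_Suc by blast
qed

section \<open>Matrices and rotations of the (Z2, Z3)-plane\<close>

lemma has_vector_derivative_vec_lambda:
  fixes f :: "real \<Rightarrow> 'a::real_normed_vector ^ 'n"
  assumes "\<And>i. ((\<lambda>t. f t $ i) has_vector_derivative f' $ i) (at t within S)"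
  shows "(f has_vector_derivative f') (at t within S)"
  using assms unfolding has_vector_derivative_def has_derivative_within
  by (auto intro!: vec_tendstoI bounded_linear_scaleR_left)

lemma bounded_bilinear_matrix_matrix_mult:
  "bounded_bilinear ((**) :: real^'n^'m \<Rightarrow> real^'p^'n \<Rightarrow> real^'p^'m)"
  unfolding bilinear_conv_bounded_bilinear[symmetric] bilinear_def
  by (auto intro!: linearI simp: vec_eq_iff matrix_matrix_mult_def algebra_simps
      sum.distrib sum_distrib_left)

lemma bounded_linear_permute_rows:
  "bounded_linear (\<lambda>M :: 'a::euclidean_space^'n. \<chi> i. M $ \<sigma> i)"
  unfolding linear_conv_bounded_linear[symmetric]
  by (rule linearI) (simp_all add: vec_eq_iff)

lemma orthogonal_matrix_permute_rows:
  fixes Z :: "real^'n^'n"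
  assumes "\<sigma> permutes UNIV" "orthogonal_matrix Z"
  shows "orthogonal_matrix (\<chi> i. Z $ \<sigma> i)"
proof -
  have "\<sigma> i = \<sigma> j \<longleftrightarrow> i = j" for i j
    using assms(1) by (meson permutes_inj injD)
  moreover have "row i (\<chi> i. Z $ \<sigma> i) = row (\<sigma> i) Z" for i
    by (simp add: row_def)
  ultimately show ?thesis
    using assms(2) unfolding orthogonal_matrix_orthonormal_rows by metis
qed

lemma vector_4 [simp]:
  "(vector [a, b, c, d] :: 'a::zero^4) $ 1 = a" "(vector [a, b, c, d] :: 'a^4) $ 2 = b"
  "(vector [a, b, c, d] :: 'a^4) $ 3 = c" "(vector [a, b, c, d] :: 'a^4) $ 4 = d"
  by (simp_all add: vector_def)

definition rot34 :: "real \<Rightarrow> real^4^4" where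
  "rot34 \<theta> = vector [vector [1, 0, 0, 0], vector [0, 1, 0, 0],
                      vector [0, 0, cos \<theta>, sin \<theta>], vector [0, 0, - sin \<theta>, cos \<theta>]]"

definition rot34_generator :: "real^4^4" where
  "rot34_generator = vector [0, 0, vector [0, 0, 0, 1], vector [0, 0, -1, 0]]"

lemma orthogonal_matrix_rot34: "orthogonal_matrix (rot34 \<theta>)"
  unfolding orthogonal_matrix vec_eq_iff forall_4 matrix_matrix_mult_def
  by (simp add: rot34_def sum_4 transpose_def mat_def power2_eq_square[symmetric])

lemma rot34_mult_row1: "(rot34 \<theta> ** M) $ 1 = M $ 1"
  by (simp add: rot34_def matrix_matrix_mult_def sum_4 vec_eq_iff)

lemma has_vector_derivative_rot34:
  assumes "(\<theta> has_real_derivative \<theta>') (at t)"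
  shows "((\<lambda>t. rot34 (\<theta> t)) has_vector_derivative \<theta>' *\<^sub>R (rot34_generator ** rot34 (\<theta> t))) (at t)"
proof (intro has_vector_derivative_vec_lambda)
  fix i j :: 4
  have cos': "((\<lambda>t. cos (\<theta> t)) has_real_derivative - (\<theta>' * sin (\<theta> t))) (at t)"
    using DERIV_fun_cos[OF assms] by (simp add: mult.commute)
  have sin': "((\<lambda>t. sin (\<theta> t)) has_real_derivative \<theta>' * cos (\<theta> t)) (at t)"
    using DERIV_fun_sin[OF assms] by (simp add: mult.commute)
  note derivs = cos' sin' DERIV_minus[OF sin']
  show "((\<lambda>t. rot34 (\<theta> t) $ i $ j) has_vector_derivative
      (\<theta>' *\<^sub>R (rot34_generator ** rot34 (\<theta> t))) $ i $ j) (at t)"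
    using exhaust_4[of i] exhaust_4[of j] derivs
    by (auto simp: rot34_def rot34_generator_def matrix_matrix_mult_def sum_4
        has_real_derivative_iff_has_vector_derivative[symmetric])
qed

text \<open>For \<open>\<theta>' = -x3\<close> this is \<open>R' + R F = D R\<close>: the rotation absorbs the entry x3 of F.\<close>

lemma rot34_gauge_transform_matF:
  "(- x3) *\<^sub>R (rot34_generator ** rot34 \<theta>) + rot34 \<theta> ** matF x1 x2 x3 =
    matD x1 (x2 * cos \<theta>) (- (x2 * sin \<theta>)) ** rot34 \<theta>"
proof -
  have "x2 * (cos \<theta> * cos \<theta>) + x2 * (sin \<theta> * sin \<theta>) = x2"
    by (simp flip: distrib_left power2_eq_square)
  then show ?thesis
    unfolding vec_eq_iff forall_4 matrix_matrix_mult_def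
    by (simp add: rot34_def rot34_generator_def matF_def matD_def sum_4 algebra_simps)
qed

lemma smooth_on_rot34:
  assumes "open I" "smooth_on I \<theta>"
  shows "smooth_on I (\<lambda>t. rot34 (\<theta> t))"
proof -
  obtain \<theta>' where \<theta>': "\<forall>t\<in>I. (\<theta> has_vector_derivative \<theta>' t) (at t)" "smooth_on I \<theta>'"
    using assms(2) smooth_on_Suc by blast
  show ?thesis
  proof (rule smooth_on_linear_ode[OF assms(1) bounded_bilinear_matrix_matrix_mult])
    show "smooth_on I (\<lambda>t. \<theta>' t *\<^sub>R rot34_generator)"
      using smooth_on_bounded_linear[OF assms(1) bounded_linear_scaleR_left \<theta>'(2)] .
    show "((\<lambda>t. rot34 (\<theta> t)) has_vector_derivative
        (\<theta>' t *\<^sub>R rot34_generator) ** rot34 (\<theta> t)) (at t)" if "t \<in> I" for t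
      using has_vector_derivative_rot34 \<theta>'(1) that
      by (simp add: has_real_derivative_iff_has_vector_derivative scalar_matrix_assoc)
  qed
qed

lemma smooth_on_cos_sin:
  fixes \<theta> :: "real \<Rightarrow> real"
  assumes "open I" "smooth_on I \<theta>"
  shows "smooth_on I (\<lambda>t. cos (\<theta> t))" "smooth_on I (\<lambda>t. sin (\<theta> t))"
proof -
  have entry: "bounded_linear (\<lambda>M :: real^4^4. M $ i $ j)" for i j
    using bounded_linear_compose[OF bounded_linear_vec_nth bounded_linear_vec_nth] .
  show "smooth_on I (\<lambda>t. cos (\<theta> t))"
    using smooth_on_bounded_linear[OF assms(1) entry[of 3 3] smooth_on_rot34[OF assms]]
    by (simp add: rot34_def)
  show "smooth_on I (\<lambda>t. sin (\<theta> t))"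
    using smooth_on_bounded_linear[OF assms(1) entry[of 3 4] smooth_on_rot34[OF assms]]
    by (simp add: rot34_def)
qed

section \<open>Frames\<close>

lemma frame_of_formI:
  assumes "is_frame I \<gamma> W" "smooth_on I x1" "smooth_on I x2" "smooth_on I x3"
    and "\<And>t. t \<in> I \<Longrightarrow> (W has_vector_derivative M (x1 t) (x2 t) (x3 t) ** W t) (at t)"
  shows "frame_of_form M I \<gamma> W"
  unfolding frame_of_form_def
proof (intro conjI assms(1) exI[of _ "id :: 4 \<Rightarrow> 4"] permutes_id id_apply)
  show "\<exists>x1 x2 x3. smooth_on I x1 \<and> smooth_on I x2 \<and> smooth_on I x3 \<and>
      (\<forall>t\<in>I. ((\<lambda>s. \<chi> i. W s $ id i) has_vector_derivative
        M (x1 t) (x2 t) (x3 t) ** (\<chi> i. W t $ id i)) (at t))"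
    using assms(2-5) by simp blast
qed

lemma frame_of_formE:
  assumes "open I" "frame_of_form M I \<gamma> Z"
  obtains W x1 x2 x3 where "is_frame I \<gamma> W" "smooth_on I x1" "smooth_on I x2" "smooth_on I x3"
    "\<And>t. t \<in> I \<Longrightarrow> (W has_vector_derivative M (x1 t) (x2 t) (x3 t) ** W t) (at t)"
proof -
  obtain \<sigma> x1 x2 x3 where \<sigma>: "\<sigma> permutes UNIV" "\<sigma> 1 = 1"
    and x: "smooth_on I x1" "smooth_on I x2" "smooth_on I x3"
    and W': "\<forall>t\<in>I. ((\<lambda>s. \<chi> i. Z s $ \<sigma> i) has_vector_derivative
      M (x1 t) (x2 t) (x3 t) ** (\<chi> i. Z t $ \<sigma> i)) (at t)"
    using assms(2) unfolding frame_of_form_def by blast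
  have "is_frame I \<gamma> Z" "smooth_on I Z"
    using assms(2) unfolding frame_of_form_def is_frame_def by blast+
  then have "is_frame I \<gamma> (\<lambda>s. \<chi> i. Z s $ \<sigma> i)"
    using smooth_on_bounded_linear[OF assms(1) bounded_linear_permute_rows]
      orthogonal_matrix_permute_rows[OF \<sigma>(1)] \<sigma>(2)
    unfolding is_frame_def by auto
  with x W' show ?thesis using that by blast
qed

lemma is_frame_rot34_mult:
  assumes "open I" "is_frame I \<gamma> W" "smooth_on I \<theta>"
  shows "is_frame I \<gamma> (\<lambda>t. rot34 (\<theta> t) ** W t)"
proof -
  have "smooth_on I W" using assms(2) unfolding is_frame_def by blast
  with assms show ?thesis
    using smooth_on_bounded_bilinear[OF assms(1) bounded_bilinear_matrix_matrix_mult
        smooth_on_rot34[OF assms(1,3)]]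
    unfolding is_frame_def by (simp add: orthogonal_matrix_mul orthogonal_matrix_rot34 rot34_mult_row1)
qed

lemma has_vector_derivative_rot34_mult:
  assumes "(W has_vector_derivative matF x1 x2 x3 ** W t) (at t)"
    and "(\<theta> has_real_derivative - x3) (at t)"
  shows "((\<lambda>s. rot34 (\<theta> s) ** W s) has_vector_derivative
    matD x1 (x2 * cos (\<theta> t)) (- (x2 * sin (\<theta> t))) ** (rot34 (\<theta> t) ** W t)) (at t)"
proof -
  let ?R = "rot34 (\<theta> t)"
  have "((\<lambda>s. rot34 (\<theta> s) ** W s) has_vector_derivative
      ?R ** (matF x1 x2 x3 ** W t) + ((- x3) *\<^sub>R (rot34_generator ** ?R)) ** W t) (at t)"
    using bounded_bilinear.has_vector_derivative[OF bounded_bilinear_matrix_matrix_mult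
        has_vector_derivative_rot34[OF assms(2)] assms(1)] .
  also have "?R ** (matF x1 x2 x3 ** W t) + ((- x3) *\<^sub>R (rot34_generator ** ?R)) ** W t =
      ((- x3) *\<^sub>R (rot34_generator ** ?R) + ?R ** matF x1 x2 x3) ** W t"
    unfolding bounded_bilinear.add_left[OF bounded_bilinear_matrix_matrix_mult] matrix_mul_assoc
    by (rule add.commute)
  finally show ?thesis
    by (simp only: rot34_gauge_transform_matF matrix_mul_assoc)
qed

lemma frame_of_form_matD_rot34_mult:
  assumes "open I" "is_frame I \<gamma> W" "smooth_on I x1" "smooth_on I x2"
    and W': "\<And>t. t \<in> I \<Longrightarrow> (W has_vector_derivative matF (x1 t) (x2 t) (x3 t) ** W t) (at t)"
    and "smooth_on I \<theta>"
    and \<theta>': "\<And>t. t \<in> I \<Longrightarrow> (\<theta> has_real_derivative - x3 t) (at t)"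
  shows "frame_of_form matD I \<gamma> (\<lambda>t. rot34 (\<theta> t) ** W t)"
proof (rule frame_of_formI[OF is_frame_rot34_mult[OF assms(1,2,6)] assms(3)])
  note smooth_mult = smooth_on_bounded_bilinear[OF assms(1) bounded_bilinear_mult assms(4)]
  show "smooth_on I (\<lambda>t. x2 t * cos (\<theta> t))"
    using smooth_mult[OF smooth_on_cos_sin(1)[OF assms(1,6)]] .
  show "smooth_on I (\<lambda>t. - (x2 t * sin (\<theta> t)))"
    using smooth_on_bounded_linear[OF assms(1) bounded_linear_minus[OF bounded_linear_ident]
        smooth_mult[OF smooth_on_cos_sin(2)[OF assms(1,6)]]] .
  show "((\<lambda>t. rot34 (\<theta> t) ** W t) has_vector_derivative
      matD (x1 t) (x2 t * cos (\<theta> t)) (- (x2 t * sin (\<theta> t))) ** (rot34 (\<theta> t) ** W t)) (at t)"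
    if "t \<in> I" for t
    using has_vector_derivative_rot34_mult[OF W'[OF that] \<theta>'[OF that]] .
qed

theorem corollary1:
  fixes I :: "real set" and \<gamma> :: "real \<Rightarrow> real^4"
  assumes "unit_speed_curve I \<gamma>"
    and "\<exists>Z. frame_type_F I \<gamma> Z"
  shows "\<exists>Z. frame_type_D I \<gamma> Z"
proof -
  have I: "open_interval I" and "open I"
    using assms(1) unfolding unit_speed_curve_def open_interval_def by blast+
  obtain W x1 x2 x3 where W: "is_frame I \<gamma> W" and x: "smooth_on I x1" "smooth_on I x2" "smooth_on I x3"
    and W': "\<And>t. t \<in> I \<Longrightarrow> (W has_vector_derivative matF (x1 t) (x2 t) (x3 t) ** W t) (at t)"
    using assms(2) frame_of_formE[OF \<open>open I\<close>] unfolding frame_type_F_def by metis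
  obtain \<theta> :: "real \<Rightarrow> real" where \<theta>: "smooth_on I \<theta>"
    and \<theta>': "\<And>t. t \<in> I \<Longrightarrow> (\<theta> has_real_derivative - x3 t) (at t)"
    using smooth_on_has_smooth_antiderivative[OF I smooth_on_bounded_linear[OF \<open>open I\<close>
          bounded_linear_minus[OF bounded_linear_ident] x(3)]]
    unfolding has_real_derivative_iff_has_vector_derivative by blast
  from frame_of_form_matD_rot34_mult[OF \<open>open I\<close> W x(1,2) W' \<theta> \<theta>']
  show ?thesis unfolding frame_type_D_def by blast
qed

end
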